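(* Let $a=a_0+a_1e_1+a_2e_2+a_3e_3$ and $b=b_0+b_1e_1+b_2e_2+b_3e_3$ be elements of $C\ell_2\setminus\mathbb{R}$ with $a_0=b_0$ and $G(a)=G(b)$. Then the general solution of the linear equation $ax=xb$ (in $x\in C\ell_2$) is $$x=y-\frac{a'ay-a'yb-ayb'+ybb'}{2(|Cim(a)|^2+|Cim(b)|^2)},\qquad y\in C\ell_2\text{ arbitrary}.$$
   Context: $C\ell_2$ is the 4-dimensional real associative algebra with basis $1,e_1,e_2,e_3$ and multiplication $e_1^2=e_2^2=1$, $e_3^2=-1$, $e_1e_2=e_3=-e_2e_1$, $e_1e_3=e_2=-e_3e_1$, $e_3e_2=e_1=-e_2e_3$; $\mathbb{R}$ is identified with $\mathbb{R}\cdot 1$. For $a=a_0+a_1e_1+a_2e_2+a_3e_3$ ($a_i\in\mathbb{R}$): $a'=a_0+a_1e_1+a_2e_2-a_3e_3$, $G(a)=a_1^2+a_2^2-a_3^2$, $|Cim(a)|^2=a_1^2+a_2^2+a_3^2$. *)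

theory Defs
  imports Complex_Main
begin

text \<open>The Clifford algebra Cl_2: elements a0 + a1 e1 + a2 e2 + a3 e3.\<close>
datatype cl2 = Cl2 (c0: real) (c1: real) (c2: real) (c3: real)

instantiation cl2 :: "{zero, one, plus, minus, uminus, times, scaleR}"
begin
definition "0 = Cl2 0 0 0 0"
definition "1 = Cl2 1 0 0 0"
definition "a + b = Cl2 (c0 a + c0 b) (c1 a + c1 b) (c2 a + c2 b) (c3 a + c3 b)"
definition "a - b = Cl2 (c0 a - c0 b) (c1 a - c1 b) (c2 a - c2 b) (c3 a - c3 b)"
definition "- a = Cl2 (- c0 a) (- c1 a) (- c2 a) (- c3 a)"
definition "scaleR r a = Cl2 (r * c0 a) (r * c1 a) (r * c2 a) (r * c3 a)"
text \<open>Multiplication from e1^2 = e2^2 = 1, e3^2 = -1, e1 e2 = e3 = - e2 e1,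
  e1 e3 = e2 = - e3 e1, e3 e2 = e1 = - e2 e3, extended bilinearly.\<close>
definition "a * b = Cl2
   (c0 a * c0 b + c1 a * c1 b + c2 a * c2 b - c3 a * c3 b)
   (c0 a * c1 b + c1 a * c0 b - c2 a * c3 b + c3 a * c2 b)
   (c0 a * c2 b + c2 a * c0 b + c1 a * c3 b - c3 a * c1 b)
   (c0 a * c3 b + c3 a * c0 b + c1 a * c2 b - c2 a * c1 b)"
instance ..
end

definition cl2_of_real :: "real \<Rightarrow> cl2" where
  "cl2_of_real r = Cl2 r 0 0 0"

definition cl2_conj :: "cl2 \<Rightarrow> cl2" where
  "cl2_conj a = Cl2 (c0 a) (c1 a) (c2 a) (- c3 a)"

definition cl2_G :: "cl2 \<Rightarrow> real" where
  "cl2_G a = (c1 a)^2 + (c2 a)^2 - (c3 a)^2"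

definition cl2_Cim_sq :: "cl2 \<Rightarrow> real" where
  "cl2_Cim_sq a = (c1 a)^2 + (c2 a)^2 + (c3 a)^2"

end

theory Submission
  imports Defs
begin

text \<open>Write \<open>a = c + u\<close>, \<open>b = c + v\<close> with \<open>c = a\<^sub>0 = b\<^sub>0\<close> real and \<open>u\<close>, \<open>v\<close> pure.
  Then \<open>D x = a x - x b = u x - x v\<close>, and the numerator of the formula is
  \<open>L y = a' D y - D y b'\<close>. Since \<open>u\<^sup>2 = G(a) = G(b) = v\<^sup>2\<close> and the anticommutator
  \<open>u u' + u' u = 2 |Cim(a)|\<^sup>2\<close> is real (likewise for \<open>v\<close>), expanding
  \<open>D (L y)\<close> and substituting \<open>D y = u y - y v\<close> leaves \<open>D (L y) = 2 (|Cim(a)|\<^sup>2 + |Cim(b)|\<^sup>2) D y\<close>.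
  So \<open>y \<mapsto> y - L y / (2 (|Cim(a)|\<^sup>2 + |Cim(b)|\<^sup>2))\<close> maps into the solution space \<open>ker D\<close>,
  and it fixes \<open>ker D\<close> pointwise because \<open>L\<close> vanishes there.\<close>

lemmas cl2_op_defs =
  zero_cl2_def one_cl2_def plus_cl2_def minus_cl2_def uminus_cl2_def scaleR_cl2_def times_cl2_def

instance cl2 :: real_algebra_1
  by standard (simp_all add: cl2.expand cl2_op_defs algebra_simps)

lemma of_real_cl2: "of_real r = Cl2 r 0 0 0"
  by (simp add: of_real_def cl2_op_defs)

lemma sylvester_projection_identity:
  fixes u v u' v' y :: "'a::real_algebra_1"
  assumes uu: "u * u = of_real g" and vv: "v * v = of_real g"
    and uu': "u * u' + u' * u = of_real (2 * \<alpha>)"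
    and vv': "v * v' + v' * v = of_real (2 * \<beta>)"
  defines "d \<equiv> u * y - y * v"
  shows "u * (u' * d - d * v') - (u' * d - d * v') * v = (2 * (\<alpha> + \<beta>)) *\<^sub>R d"
proof -
  have "u * (u' * d - d * v') - (u' * d - d * v') * v
      = (u * u' + u' * u) * d + d * (v * v' + v' * v)
        - (u' * (u * d) + u * d * v' + u' * d * v + d * v * v')"
    by (simp add: algebra_simps)
  also have "u' * (u * d) + u * d * v' + u' * d * v + d * v * v'
      = u' * (u * u) * y - y * (v * v) * v' + (u * u) * y * v' - u' * y * (v * v)"
    by (simp add: d_def algebra_simps)
  also have "\<dots> = 0"
    by (simp add: uu vv of_real_def algebra_simps)
  finally show ?thesis
    by (simp add: uu' vv' of_real_def algebra_simps)
qed

definition cl2_vec :: "cl2 \<Rightarrow> cl2" where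
  "cl2_vec a = Cl2 0 (c1 a) (c2 a) (c3 a)"

lemma cl2_decomp_scalar_vec: "a = of_real (c0 a) + cl2_vec a"
  by (simp add: cl2.expand of_real_cl2 cl2_vec_def plus_cl2_def)

lemma cl2_conj_decomp_scalar_vec: "cl2_conj a = of_real (c0 a) + cl2_conj (cl2_vec a)"
  by (simp add: cl2.expand of_real_cl2 cl2_vec_def cl2_conj_def plus_cl2_def)

lemma cl2_vec_square: "cl2_vec a * cl2_vec a = of_real (cl2_G a)"
  by (simp add: cl2.expand of_real_cl2 cl2_vec_def cl2_G_def times_cl2_def power2_eq_square)

lemma cl2_vec_conj_anticommute:
  "cl2_vec a * cl2_conj (cl2_vec a) + cl2_conj (cl2_vec a) * cl2_vec a
    = of_real (2 * cl2_Cim_sq a)"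
  by (simp add: cl2.expand of_real_cl2 cl2_vec_def cl2_conj_def cl2_Cim_sq_def cl2_op_defs
      power2_eq_square)

lemma cl2_Cim_sq_pos:
  assumes "a \<notin> range cl2_of_real"
  shows "0 < cl2_Cim_sq a"
proof -
  have "a \<noteq> cl2_of_real (c0 a)"
    using assms by blast
  then have "c1 a \<noteq> 0 \<or> c2 a \<noteq> 0 \<or> c3 a \<noteq> 0"
    by (auto simp: cl2.expand cl2_of_real_def)
  then show ?thesis
    unfolding cl2_Cim_sq_def by (smt (verit) zero_le_power2 zero_less_power2)
qed

lemma cl2_sylvester_projection_identity:
  fixes a b y :: cl2
  assumes "c0 a = c0 b" and "cl2_G a = cl2_G b"
  defines "d \<equiv> \<lambda>y. a * y - y * b"
  shows "d (cl2_conj a * d y - d y * cl2_conj b)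
    = (2 * (cl2_Cim_sq a + cl2_Cim_sq b)) *\<^sub>R d y"
proof -
  define c :: cl2 where "c = of_real (c0 a)"
  have a: "a = c + cl2_vec a" and b: "b = c + cl2_vec b"
    using cl2_decomp_scalar_vec assms(1) unfolding c_def by metis+
  have a': "cl2_conj a = c + cl2_conj (cl2_vec a)" and b': "cl2_conj b = c + cl2_conj (cl2_vec b)"
    using cl2_conj_decomp_scalar_vec assms(1) unfolding c_def by metis+
  have scalar_cancel: "(c + u) * z - z * (c + v) = u * z - z * v" for u v z
    by (simp add: c_def of_real_def algebra_simps)
  have "d z = cl2_vec a * z - z * cl2_vec b" for z
    unfolding d_def by (subst a, subst b, rule scalar_cancel)
  moreover have "cl2_conj a * z - z * cl2_conj b
      = cl2_conj (cl2_vec a) * z - z * cl2_conj (cl2_vec b)" for z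
    by (subst a', subst b', rule scalar_cancel)
  ultimately show ?thesis
    using sylvester_projection_identity[OF cl2_vec_square[of a]
        cl2_vec_square[of b, folded assms(2)] cl2_vec_conj_anticommute cl2_vec_conj_anticommute]
    by simp
qed

lemma kernel_eq_range_of_projection:
  fixes d :: "'a::real_vector \<Rightarrow> 'b::real_vector" and L :: "'a \<Rightarrow> 'a"
  assumes "linear d" and "c \<noteq> 0"
    and dL: "\<And>y. d (L y) = c *\<^sub>R d y" and L_ker: "\<And>x. d x = 0 \<Longrightarrow> L x = 0"
  shows "{x. d x = 0} = range (\<lambda>y. y - (1 / c) *\<^sub>R L y)"
proof (intro set_eqI iffI)
  fix x
  assume "x \<in> {x. d x = 0}"
  then have "x = x - (1 / c) *\<^sub>R L x"
    using L_ker by simp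
  then show "x \<in> range (\<lambda>y. y - (1 / c) *\<^sub>R L y)"
    by blast
next
  fix x
  assume "x \<in> range (\<lambda>y. y - (1 / c) *\<^sub>R L y)"
  then obtain y where "x = y - (1 / c) *\<^sub>R L y"
    by blast
  then show "x \<in> {x. d x = 0}"
    using \<open>c \<noteq> 0\<close> by (simp add: linear_diff[OF \<open>linear d\<close>] linear_scale[OF \<open>linear d\<close>] dL)
qed

theorem theorem5p1:
  fixes a b :: cl2
  assumes "a \<notin> range cl2_of_real" and "b \<notin> range cl2_of_real"
    and "c0 a = c0 b" and "cl2_G a = cl2_G b"
  shows "{x. a * x = x * b} =
    {y - (1 / (2 * (cl2_Cim_sq a + cl2_Cim_sq b))) *\<^sub>R
          (cl2_conj a * a * y - cl2_conj a * y * b - a * y * cl2_conj b + y * b * cl2_conj b)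
     | y. True}"
proof -
  define N where "N = cl2_Cim_sq a + cl2_Cim_sq b"
  define d where "d y = a * y - y * b" for y
  define L where "L y = cl2_conj a * d y - d y * cl2_conj b" for y
  have "linear d"
    by (rule linearI) (simp_all add: d_def algebra_simps)
  moreover have "2 * N \<noteq> 0"
    using cl2_Cim_sq_pos[OF assms(1)] cl2_Cim_sq_pos[OF assms(2)] by (simp add: N_def)
  moreover have "d (L y) = (2 * N) *\<^sub>R d y" for y
    using cl2_sylvester_projection_identity[OF assms(3,4)] by (simp add: d_def L_def N_def)
  moreover have "L x = 0" if "d x = 0" for x
    using that by (simp add: L_def)
  ultimately have "{x. d x = 0} = range (\<lambda>y. y - (1 / (2 * N)) *\<^sub>R L y)"
    by (rule kernel_eq_range_of_projection)
  moreover have "L y = cl2_conj a * a * y - cl2_conj a * y * b - a * y * cl2_conj b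
      + y * b * cl2_conj b" for y
    by (simp add: L_def d_def algebra_simps)
  ultimately show ?thesis
    by (simp add: d_def N_def full_SetCompr_eq)
qed

end
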